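(* Let $G=(V,E)$ be a control flow graph and $p,a,b\in V$ three distinct nodes such that $p$ is a predicate node with successors $s_1$ and $s_2$. Then $a,b$ are DOD on $p$ if and only if (i) $p$ has at least two successors in $A_p$, (ii) there exists an $s_1$-strip in $A_p$ that contains $a$ before $b$, and (iii) there exists an $s_2$-strip in $A_p$ that contains $b$ before $a$.
   Context: A control flow graph (CFG) is a finite directed graph $G=(V,E)$ in which every node has at most two outgoing edges; nodes with exactly two outgoing edges are predicate nodes. A path from $n_1$ is a nonempty finite or infinite sequence of nodes with each adjacent pair an edge; it is maximal if it is infinite or its last node has no successor. $V_p$ is the set of nodes occurring on all maximal paths from $p$ in $G$. For $V'\subseteq V$, a $V'$-interval from $x$ to $y$ is a finite path $n_1\ldots n_k$ in $G$ with $k\ge 2$, $n_1=x\in V'$, $n_k=y\in V'$, and $n_i\notin V'$ for $1<i<k$. $A_p$ is the directed graph with node set $V_p$ and an edge $(x,y)$ iff there is a $V_p$-interval from $x$ to $y$ in $G$. For $i\in\{1,2\}$, $V_i$ is the set of nodes $n\in V_p$ such that there is a finite path in $G$ from $s_i$ to $n$ whose nodes other than the last one all lie outside $V_p$ (possibly $n=s_i$). An $s_i$-strip is a finite path $n\ldots m$ in $A_p$ whose first node lies in $V_i$ and all of whose other nodes lie in $V_p\setminus V_i$, such that the successor of $m$ in $A_p$ is a node in $V_i$. For three distinct nodes $p,a,b$ with $p$ a predicate node with successors $s_1,s_2$, the nodes $a,b$ are DOD on $p$ if all maximal paths from $p$ contain both $a$ and $b$, all maximal paths from $s_1$ contain $a$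 before any occurrence of $b$, and all maximal paths from $s_2$ contain $b$ before any occurrence of $a$. *)

theory Defs
  imports Main
begin

definition cfg :: "'v set \<Rightarrow> ('v \<times> 'v) set \<Rightarrow> bool" where
  "cfg V E \<longleftrightarrow> finite V \<and> E \<subseteq> V \<times> V \<and> (\<forall>n. card {m. (n, m) \<in> E} \<le> 2)"

definition succs :: "('v \<times> 'v) set \<Rightarrow> 'v \<Rightarrow> 'v set" where
  "succs E n = {m. (n, m) \<in> E}"

definition fpath :: "('v \<times> 'v) set \<Rightarrow> 'v list \<Rightarrow> bool" where
  "fpath E xs \<longleftrightarrow> xs \<noteq> [] \<and> (\<forall>i. Suc i < length xs \<longrightarrow> (xs ! i, xs ! Suc i) \<in> E)"

definition ipath :: "('v \<times> 'v) set \<Rightarrow> (nat \<Rightarrow> 'v) \<Rightarrow> bool" where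
  "ipath E f \<longleftrightarrow> (\<forall>i. (f i, f (Suc i)) \<in> E)"

text \<open>Maximal finite paths from n: the last node has no successor.
  (Infinite paths are always maximal.)\<close>

definition max_fpath_from :: "('v \<times> 'v) set \<Rightarrow> 'v \<Rightarrow> 'v list \<Rightarrow> bool" where
  "max_fpath_from E n xs \<longleftrightarrow> fpath E xs \<and> hd xs = n \<and> succs E (last xs) = {}"

definition ipath_from :: "('v \<times> 'v) set \<Rightarrow> 'v \<Rightarrow> (nat \<Rightarrow> 'v) \<Rightarrow> bool" where
  "ipath_from E n f \<longleftrightarrow> ipath E f \<and> f 0 = n"

definition on_all_max_paths :: "('v \<times> 'v) set \<Rightarrow> 'v \<Rightarrow> 'v \<Rightarrow> bool" where
  "on_all_max_paths E n a \<longleftrightarrow>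
     (\<forall>xs. max_fpath_from E n xs \<longrightarrow> a \<in> set xs) \<and>
     (\<forall>f. ipath_from E n f \<longrightarrow> (\<exists>i. f i = a))"

definition before_on_all_max_paths :: "('v \<times> 'v) set \<Rightarrow> 'v \<Rightarrow> 'v \<Rightarrow> 'v \<Rightarrow> bool" where
  "before_on_all_max_paths E n a b \<longleftrightarrow>
     (\<forall>xs. max_fpath_from E n xs \<longrightarrow>
        (\<exists>i < length xs. xs ! i = a \<and> (\<forall>j < i. xs ! j \<noteq> b))) \<and>
     (\<forall>f. ipath_from E n f \<longrightarrow> (\<exists>i. f i = a \<and> (\<forall>j < i. f j \<noteq> b)))"

definition Vp :: "'v set \<Rightarrow> ('v \<times> 'v) set \<Rightarrow> 'v \<Rightarrow> 'v set" where
  "Vp V E p = {n \<in> V. on_all_max_paths E p n}"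

definition interval :: "('v \<times> 'v) set \<Rightarrow> 'v set \<Rightarrow> 'v \<Rightarrow> 'v \<Rightarrow> 'v list \<Rightarrow> bool" where
  "interval E V' x y xs \<longleftrightarrow> fpath E xs \<and> length xs \<ge> 2 \<and>
     hd xs = x \<and> x \<in> V' \<and> last xs = y \<and> y \<in> V' \<and>
     (\<forall>i. 0 < i \<and> i < length xs - 1 \<longrightarrow> xs ! i \<notin> V')"

text \<open>Edge relation of the graph A_p (node set V_p).\<close>

definition Ap :: "'v set \<Rightarrow> ('v \<times> 'v) set \<Rightarrow> 'v \<Rightarrow> ('v \<times> 'v) set" where
  "Ap V E p = {(x, y). \<exists>xs. interval E (Vp V E p) x y xs}"

definition Vs :: "'v set \<Rightarrow> ('v \<times> 'v) set \<Rightarrow> 'v \<Rightarrow> 'v \<Rightarrow> 'v set" where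
  "Vs V E p s = {n \<in> Vp V E p. \<exists>xs. fpath E xs \<and> hd xs = s \<and> last xs = n \<and>
       (\<forall>k. k < length xs - 1 \<longrightarrow> xs ! k \<notin> Vp V E p)}"

definition strip :: "'v set \<Rightarrow> ('v \<times> 'v) set \<Rightarrow> 'v \<Rightarrow> 'v \<Rightarrow> 'v list \<Rightarrow> bool" where
  "strip V E p s ns \<longleftrightarrow> fpath (Ap V E p) ns \<and> hd ns \<in> Vs V E p s \<and>
     (\<forall>k. 0 < k \<and> k < length ns \<longrightarrow> ns ! k \<in> Vp V E p - Vs V E p s) \<and>
     (\<exists>y. (last ns, y) \<in> Ap V E p \<and> y \<in> Vs V E p s)"

definition contains_before :: "'v list \<Rightarrow> 'v \<Rightarrow> 'v \<Rightarrow> bool" where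
  "contains_before ns a b \<longleftrightarrow> (\<exists>i j. i < j \<and> j < length ns \<and> ns ! i = a \<and> ns ! j = b)"

text \<open>DOD: a, b are dually ordering dependent on p (successors s1, s2).\<close>

definition DOD :: "('v \<times> 'v) set \<Rightarrow> 'v \<Rightarrow> 'v \<Rightarrow> 'v \<Rightarrow> 'v \<Rightarrow> 'v \<Rightarrow> bool" where
  "DOD E p s1 s2 a b \<longleftrightarrow>
     on_all_max_paths E p a \<and> on_all_max_paths E p b \<and>
     before_on_all_max_paths E s1 a b \<and> before_on_all_max_paths E s2 b a"

end

theory Submission
  imports Defs
begin

text \<open>
  Say that \<open>n\<close> escapes \<open>A\<close> if some maximal path from \<open>n\<close> avoids \<open>A\<close>. Then \<open>a\<close> lies on all
  maximal paths from \<open>n\<close> iff \<open>n\<close> does not escape \<open>{a}\<close>, and \<open>a\<close> comes before \<open>b\<close> on all of them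
  iff moreover no path from \<open>n\<close> reaches \<open>b\<close> while avoiding \<open>a\<close>. Paths of \<open>A\<^sub>p\<close> are the
  projections onto \<open>V\<^sub>p\<close> of paths of \<open>G\<close>, and every path of \<open>A\<^sub>p\<close> lifts to a path of \<open>G\<close> that
  meets \<open>V\<^sub>p\<close> only in nodes of the \<open>A\<^sub>p\<close>-path.

  If \<open>a, b\<close> are DOD on \<open>p\<close>, the first nodes of \<open>V\<^sub>p\<close> reached from \<open>s\<^sub>1\<close> and from \<open>s\<^sub>2\<close> are distinct
  successors of \<open>p\<close> in \<open>A\<^sub>p\<close>, and an \<open>s\<^sub>1\<close>-strip is the projection of a path that leaves \<open>V\<^sub>1\<close>
  for the last time before \<open>a\<close>, goes on to \<open>b\<close> and then returns to \<open>V\<^sub>1\<close>.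

  Conversely, if \<open>p\<close> has two successors in \<open>A\<^sub>p\<close>, then every node of \<open>V\<^sub>p - {p}\<close> lies on
  all maximal paths from every other node of \<open>V\<^sub>p - {p}\<close>. A path from \<open>s\<^sub>1\<close> to \<open>b\<close> avoiding \<open>a\<close>
  would enter \<open>V\<^sub>1\<close> at a node \<open>c\<close> outside the segment from \<open>a\<close> to \<open>b\<close> of the strip; together with
  the lift of that segment it closes a cycle through \<open>b\<close> avoiding \<open>a\<close> or \<open>c\<close>, which is impossible.
\<close>

lemma fpath_iff_successively: "fpath E xs \<longleftrightarrow> xs \<noteq> [] \<and> successively (\<lambda>x y. (x, y) \<in> E) xs"
  by (auto simp: fpath_def successively_conv_nth)

lemma fpath_Nil [simp]: "\<not> fpath E []"
  by (simp add: fpath_def)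

lemma fpath_singleton [simp]: "fpath E [x]"
  by (simp add: fpath_iff_successively)

lemma fpath_Cons_Cons [simp]: "fpath E (x # y # xs) \<longleftrightarrow> (x, y) \<in> E \<and> fpath E (y # xs)"
  by (simp add: fpath_iff_successively)

lemma fpath_Cons: "fpath E (x # xs) \<longleftrightarrow> xs = [] \<or> (x, hd xs) \<in> E \<and> fpath E xs"
  by (cases xs) auto

lemma fpath_append:
  "fpath E (xs @ ys) \<longleftrightarrow>
     (xs = [] \<and> fpath E ys) \<or> (ys = [] \<and> fpath E xs) \<or>
     (fpath E xs \<and> fpath E ys \<and> (last xs, hd ys) \<in> E)"
  by (auto simp: fpath_iff_successively successively_append_iff)

lemma fpath_infix: "fpath E (xs @ ys @ zs) \<Longrightarrow> ys \<noteq> [] \<Longrightarrow> fpath E ys"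
  by (auto simp: fpath_append)

lemma fpath_join:
  assumes "fpath E xs" "fpath E ys" "last xs = hd ys"
  shows "fpath E (xs @ tl ys)"
  using assms by (cases ys) (auto simp: fpath_append fpath_Cons)

lemma fpath_map_upt: "ipath E f \<Longrightarrow> fpath E (map f [0..<Suc n])"
  by (simp add: fpath_def ipath_def del: upt_Suc)

lemma all_nth_butlast_iff: "(\<forall>k. k < length xs - 1 \<longrightarrow> P (xs ! k)) \<longleftrightarrow> (\<forall>z\<in>set (butlast xs). P z)"
  by (simp add: all_set_conv_all_nth nth_butlast)

lemma all_nth_tl_iff: "(\<forall>k. 0 < k \<and> k < length xs \<longrightarrow> P (xs ! k)) \<longleftrightarrow> (\<forall>z\<in>set (tl xs). P z)"
proof -
  have "(\<forall>k. 0 < k \<and> k < length xs \<longrightarrow> P (xs ! k)) \<longleftrightarrow> (\<forall>k<length xs - 1. P (xs ! Suc k))"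
    by (metis Suc_pred less_diff_conv zero_less_Suc add.commute plus_1_eq_Suc)
  then show ?thesis by (simp add: all_set_conv_all_nth nth_tl)
qed

lemma all_nth_inner_iff:
  "(\<forall>k. 0 < k \<and> k < length xs - 1 \<longrightarrow> P (xs ! k)) \<longleftrightarrow> (\<forall>z\<in>set (butlast (tl xs)). P z)"
  using all_nth_tl_iff[of "butlast xs" P] by (simp add: butlast_tl nth_butlast)

lemma contains_before_iff: "contains_before xs a b \<longleftrightarrow> (\<exists>u v w. xs = u @ a # v @ b # w)"
proof
  assume "contains_before xs a b"
  then obtain i j where "i < j" "j < length xs" "xs ! i = a" "xs ! j = b"
    by (auto simp: contains_before_def)
  then have "xs = take i xs @ a # drop (Suc i) xs" "drop (Suc i) xs ! (j - Suc i) = b"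
    "j - Suc i < length (drop (Suc i) xs)"
    by (metis id_take_nth_drop less_trans, simp_all)
  then have "xs = take i xs @ a # take (j - Suc i) (drop (Suc i) xs) @ b # drop (Suc (j - Suc i)) (drop (Suc i) xs)"
    by (metis id_take_nth_drop)
  then show "\<exists>u v w. xs = u @ a # v @ b # w" by blast
next
  assume "\<exists>u v w. xs = u @ a # v @ b # w"
  then obtain u v w where "xs = u @ a # v @ b # w" by blast
  then show "contains_before xs a b"
    unfolding contains_before_def
    by (intro exI[of _ "length u"] exI[of _ "Suc (length u + length v)"]) (auto simp: nth_append)
qed

lemma contains_before_append:
  "xs \<noteq> [] \<Longrightarrow> ys \<noteq> [] \<Longrightarrow> contains_before (xs @ ys @ zs) (last xs) (last ys)"
  unfolding contains_before_iff
  by (metis append_butlast_last_id append.assoc append_Cons append_Nil)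

section \<open>Escaping a set of nodes\<close>

coinductive escapes :: "('v \<times> 'v) set \<Rightarrow> 'v set \<Rightarrow> 'v \<Rightarrow> bool" for E A where
  sink: "n \<notin> A \<Longrightarrow> succs E n = {} \<Longrightarrow> escapes E A n"
| step: "n \<notin> A \<Longrightarrow> (n, m) \<in> E \<Longrightarrow> escapes E A m \<Longrightarrow> escapes E A n"

definition reach_avoiding :: "('v \<times> 'v) set \<Rightarrow> 'v set \<Rightarrow> 'v \<Rightarrow> 'v \<Rightarrow> bool" where
  "reach_avoiding E A n m \<longleftrightarrow> (\<exists>xs. fpath E xs \<and> hd xs = n \<and> last xs = m \<and> set xs \<inter> A = {})"

lemma reach_avoiding_not_in: "reach_avoiding E A n m \<Longrightarrow> n \<notin> A \<and> m \<notin> A"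
  unfolding reach_avoiding_def by (metis disjoint_iff fpath_Nil hd_in_set last_in_set)

lemma escapes_not_in: "escapes E A n \<Longrightarrow> n \<notin> A"
  by (erule escapes.cases) auto

lemma escapes_antimono: "escapes E B n \<Longrightarrow> A \<subseteq> B \<Longrightarrow> escapes E A n"
proof (coinduction arbitrary: n rule: escapes.coinduct)
  case (escapes n)
  then show ?case by cases auto
qed

lemma escapes_empty: "escapes E {} n"
proof (coinduction arbitrary: n rule: escapes.coinduct)
  case (escapes n)
  then show ?case by (auto simp: succs_def)
qed

lemma escapes_Un:
  assumes "escapes E A n" "\<forall>m\<in>B. \<not> escapes E A m"
  shows "escapes E (A \<union> B) n"
  using assms(1)
proof (coinduction arbitrary: n rule: escapes.coinduct)
  case (escapes n)
  then have "n \<notin> B" using assms(2) by auto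
  with escapes show ?case by cases auto
qed

lemma reach_avoiding_trans:
  assumes "reach_avoiding E A n m" "reach_avoiding E A m k"
  shows "reach_avoiding E A n k"
proof -
  obtain xs ys where "fpath E xs" "hd xs = n" "last xs = m" "set xs \<inter> A = {}"
    "fpath E ys" "hd ys = m" "last ys = k" "set ys \<inter> A = {}"
    using assms by (auto simp: reach_avoiding_def)
  moreover have "fpath E (xs @ tl ys)" by (rule fpath_join) (simp_all add: calculation)
  moreover have "xs \<noteq> []" "ys \<noteq> []" using \<open>fpath E xs\<close> \<open>fpath E ys\<close> by auto
  ultimately show ?thesis
    unfolding reach_avoiding_def by (intro exI[of _ "xs @ tl ys"]) (cases ys; auto)
qed

lemma reach_avoiding_to_mem:
  assumes "fpath E xs" "set xs \<inter> A = {}" "x \<in> set xs"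
  shows "reach_avoiding E A (hd xs) x"
proof -
  obtain u w where "xs = u @ x # w" using assms(3) by (meson split_list)
  with assms show ?thesis
    unfolding reach_avoiding_def
    by (intro exI[of _ "u @ [x]"]) (auto simp: fpath_append hd_append)
qed

lemma reach_avoiding_from_mem:
  assumes "fpath E xs" "set xs \<inter> A = {}" "x \<in> set xs"
  shows "reach_avoiding E A x (last xs)"
proof -
  obtain u w where "xs = u @ x # w" using assms(3) by (meson split_list)
  with assms show ?thesis
    unfolding reach_avoiding_def
    by (intro exI[of _ "x # w"]) (auto simp: fpath_append)
qed

lemma escapes_if_reach_avoiding:
  "reach_avoiding E A n m \<Longrightarrow> escapes E A m \<Longrightarrow> escapes E A n"
proof -
  have "fpath E xs \<Longrightarrow> set xs \<inter> A = {} \<Longrightarrow> escapes E A (last xs) \<Longrightarrow> escapes E A (hd xs)" for xs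
    by (induction xs rule: induct_list012) (auto intro: escapes.step)
  then show "reach_avoiding E A n m \<Longrightarrow> escapes E A m \<Longrightarrow> escapes E A n"
    unfolding reach_avoiding_def by blast
qed

lemma escapes_if_cycle:
  assumes "(n, m) \<in> E" "reach_avoiding E A m n"
  shows "escapes E A n"
proof -
  obtain xs where xs: "fpath E xs" "hd xs = m" "last xs = n" "set xs \<inter> A = {}"
    using assms(2) by (auto simp: reach_avoiding_def)
  have "x \<in> set xs \<Longrightarrow> escapes E A x" for x
  proof (coinduction arbitrary: x rule: escapes.coinduct)
    case (escapes x)
    then obtain i where i: "i < length xs" "x = xs ! i" by (auto simp: in_set_conv_nth)
    show ?case
    proof (cases "Suc i < length xs")
      case True
      have "x \<notin> A" using i xs(4) nth_mem by blast
      moreover have "(x, xs ! Suc i) \<in> E" using True i xs(1) by (simp add: fpath_def)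
      moreover have "xs ! Suc i \<in> set xs" using True by simp
      ultimately show ?thesis by blast
    next
      case False
      then have "i = length xs - 1" using i by simp
      moreover have "xs \<noteq> []" using i by auto
      ultimately have "x = n" using i xs(3) by (simp add: last_conv_nth)
      moreover have "m \<in> set xs" using xs(1,2) by (metis fpath_Nil hd_in_set)
      moreover have "x \<notin> A" using escapes xs(4) by blast
      ultimately show ?thesis using assms(1) by blast
    qed
  qed
  then show ?thesis using xs(1,3) by (metis fpath_Nil last_in_set)
qed

lemma escapes_if_reach_avoiding_cycle:
  assumes "reach_avoiding E A x y" "reach_avoiding E A y x" "x \<noteq> y"
  shows "escapes E A x"
proof -
  obtain xs where xs: "fpath E (x # xs)" "last (x # xs) = y" "set (x # xs) \<inter> A = {}"
    using assms(1) unfolding reach_avoiding_def by (metis fpath_Nil list.collapse)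
  with assms(3) have "xs \<noteq> []" "(x, hd xs) \<in> E" "reach_avoiding E A (hd xs) y"
    unfolding reach_avoiding_def by (auto simp: fpath_Cons)
  have "reach_avoiding E A (hd xs) x"
    using \<open>reach_avoiding E A (hd xs) y\<close> assms(2) by (rule reach_avoiding_trans)
  with \<open>(x, hd xs) \<in> E\<close> show ?thesis by (rule escapes_if_cycle)
qed

lemma escapes_last_visit:
  assumes "fpath E xs" "escapes E A (last xs)" "set xs \<inter> A \<noteq> {}"
  shows "\<exists>q\<in>A. escapes E (A - {q}) q"
proof -
  obtain u q w where xs: "xs = u @ q # w" "q \<in> A" "\<forall>z\<in>set w. z \<notin> A"
    using assms(3) split_list_last_prop[of xs "\<lambda>z. z \<in> A"] by blast
  then have "fpath E (q # w)" "set (q # w) \<inter> (A - {q}) = {}"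
    using assms(1) by (auto simp: fpath_append)
  then have "reach_avoiding E (A - {q}) q (last xs)"
    using reach_avoiding_from_mem[of E "q # w" "A - {q}" q] xs(1) by simp
  moreover have "escapes E (A - {q}) (last xs)"
    using assms(2) by (rule escapes_antimono) blast
  ultimately have "escapes E (A - {q}) q" by (rule escapes_if_reach_avoiding)
  with xs(2) show ?thesis ..
qed

lemma not_escapes_step:
  assumes "\<not> escapes E A n" "(n, m) \<in> E" "n \<notin> A"
  shows "\<not> escapes E A m"
  using assms escapes.step by metis

lemma escapes_succ:
  assumes "escapes E A n" "succs E n \<noteq> {}"
  shows "\<exists>m. (n, m) \<in> E \<and> escapes E A m"
  using assms by cases auto

lemma not_escapes_path:
  assumes "\<not> escapes E A n"
  shows "\<exists>xs. fpath E xs \<and> hd xs = n \<and> last xs \<in> A \<and> set (butlast xs) \<inter> A = {}"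
proof (rule ccontr)
  assume "\<not> ?thesis"
  then have "escapes E A n"
  proof (coinduction arbitrary: n rule: escapes.coinduct)
    case (escapes n)
    have "n \<notin> A"
    proof
      assume "n \<in> A"
      then have "fpath E [n] \<and> hd [n] = n \<and> last [n] \<in> A \<and> set (butlast [n]) \<inter> A = {}"
        by simp
      with escapes show False by blast
    qed
    show ?case
    proof (cases "succs E n = {}")
      case False
      then obtain m where m: "(n, m) \<in> E" by (auto simp: succs_def)
      have "\<nexists>xs. fpath E xs \<and> hd xs = m \<and> last xs \<in> A \<and> set (butlast xs) \<inter> A = {}"
      proof
        assume "\<exists>xs. fpath E xs \<and> hd xs = m \<and> last xs \<in> A \<and> set (butlast xs) \<inter> A = {}"
        then obtain xs where "fpath E xs" "hd xs = m" "last xs \<in> A" "set (butlast xs) \<inter> A = {}"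
          by blast
        with m \<open>n \<notin> A\<close> have "fpath E (n # xs) \<and> hd (n # xs) = n \<and> last (n # xs) \<in> A \<and>
            set (butlast (n # xs)) \<inter> A = {}"
          by (cases xs) (auto simp: fpath_Cons)
        with escapes show False by blast
      qed
      with m \<open>n \<notin> A\<close> show ?thesis by blast
    qed (use \<open>n \<notin> A\<close> in blast)
  qed
  with assms show False ..
qed

lemma not_escapes_path_outside:
  assumes "\<not> escapes E A n" "n \<notin> A"
  obtains u y where "fpath E (n # u @ [y])" "y \<in> A" "set u \<inter> A = {}"
proof -
  obtain xs where xs: "fpath E xs" "hd xs = n" "last xs \<in> A" "set (butlast xs) \<inter> A = {}"
    using not_escapes_path[OF assms(1)] by blast
  then obtain xs' where "xs = n # xs'" by (cases xs) auto
  moreover from this xs(3) assms(2) have "xs' \<noteq> []" by auto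
  ultimately have xs_eq: "xs = n # butlast xs' @ [last xs']" by simp
  show ?thesis
  proof (rule that)
    show "fpath E (n # butlast xs' @ [last xs'])" using xs(1) xs_eq by simp
    show "last xs' \<in> A" using xs(3) xs_eq by simp
    show "set (butlast xs') \<inter> A = {}" using xs(4) xs_eq by (simp add: butlast_append)
  qed
qed

lemma reach_avoiding_first_of:
  assumes "\<not> escapes E {a} n" "a \<noteq> c"
  shows "reach_avoiding E {c} n a \<or> reach_avoiding E {a} n c"
proof -
  have no_escape: "\<not> escapes E {a, c} n"
  proof
    assume "escapes E {a, c} n"
    then have "escapes E {a} n" by (rule escapes_antimono) blast
    with assms(1) show False ..
  qed
  obtain xs where xs: "fpath E xs" "hd xs = n" "last xs \<in> {a, c}"
    "set (butlast xs) \<inter> {a, c} = {}"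
    using not_escapes_path[OF no_escape] by blast
  consider "last xs = a" | "last xs = c" using xs(3) by blast
  then show ?thesis
  proof cases
    case 1
    then have "set xs \<inter> {c} = {}" using xs(4) assms(2) by (cases xs rule: rev_cases) auto
    then show ?thesis using xs(1,2) 1 unfolding reach_avoiding_def by blast
  next
    case 2
    then have "set xs \<inter> {a} = {}" using xs(4) assms(2) by (cases xs rule: rev_cases) auto
    then show ?thesis using xs(1,2) 2 unfolding reach_avoiding_def by blast
  qed
qed

lemma reach_avoiding_from_succ:
  assumes "\<not> escapes E {b} a" "a \<noteq> b"
  shows "\<exists>m. (a, m) \<in> E \<and> reach_avoiding E {a} m b"
proof -
  obtain xs where xs: "fpath E xs" "hd xs = a" "last xs = b"
    using not_escapes_path[OF assms(1)] by auto
  then have "a \<in> set xs" by (metis fpath_Nil hd_in_set)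
  then obtain u w where uw: "xs = u @ a # w" "a \<notin> set w"
    by (meson split_list_last)
  with xs assms(2) have "w \<noteq> []" "fpath E (a # w)" "last w = b"
    by (auto simp: fpath_append)
  with uw show ?thesis
    unfolding reach_avoiding_def
    by (intro exI[of _ "hd w"] conjI exI[of _ w]) (auto simp: fpath_Cons)
qed

lemma escapes_if_reach_avoiding_each_other:
  assumes "\<not> escapes E {a} x" "reach_avoiding E {c} a x" "reach_avoiding E {a} c x"
  shows "escapes E {c} x"
proof -
  have "a \<noteq> c" "x \<noteq> a" "x \<noteq> c"
    using reach_avoiding_not_in[OF assms(2)] reach_avoiding_not_in[OF assms(3)] by auto
  from reach_avoiding_first_of[OF assms(1) \<open>a \<noteq> c\<close>] show ?thesis
  proof
    assume "reach_avoiding E {c} x a"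
    then show ?thesis using assms(2) \<open>x \<noteq> a\<close> by (rule escapes_if_reach_avoiding_cycle)
  next
    assume "reach_avoiding E {a} x c"
    then have "escapes E {a} x" using assms(3) \<open>x \<noteq> c\<close> by (rule escapes_if_reach_avoiding_cycle)
    with assms(1) show ?thesis by contradiction
  qed
qed

section \<open>Maximal paths\<close>

lemma escapes_if_max_fpath:
  assumes "max_fpath_from E n xs" "set xs \<inter> A = {}"
  shows "escapes E A n"
proof -
  have "reach_avoiding E A n (last xs)"
    using assms unfolding max_fpath_from_def reach_avoiding_def by blast
  moreover have "xs \<noteq> []" and sink: "succs E (last xs) = {}"
    using assms(1) by (auto simp: max_fpath_from_def)
  then have "last xs \<notin> A" using assms(2) last_in_set by blast
  then have "escapes E A (last xs)" using sink by (rule escapes.sink)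
  ultimately show ?thesis by (rule escapes_if_reach_avoiding)
qed

lemma escapes_if_ipath:
  assumes "ipath_from E n f" "range f \<inter> A = {}"
  shows "escapes E A n"
proof -
  have "escapes E A (f i)" for i
  proof (coinduction arbitrary: i rule: escapes.coinduct)
    case (escapes i)
    then show ?case using assms by (auto simp: ipath_from_def ipath_def)
  qed
  then show ?thesis using assms(1) by (auto simp: ipath_from_def)
qed

lemma max_path_if_escapes:
  assumes "escapes E A n"
  shows "(\<exists>xs. max_fpath_from E n xs \<and> set xs \<inter> A = {}) \<or>
         (\<exists>f. ipath_from E n f \<and> range f \<inter> A = {})"
proof -
  define next_node where "next_node x = (SOME m. (x, m) \<in> E \<and> escapes E A m)" for x
  define f where "f i = (next_node ^^ i) n" for i
  have next_node: "(x, next_node x) \<in> E \<and> escapes E A (next_node x)"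
    if "escapes E A x" "succs E x \<noteq> {}" for x
    unfolding next_node_def using escapes_succ[OF that] by (rule someI_ex)
  have f_Suc: "f (Suc i) = next_node (f i)" for i
    by (simp add: f_def)
  have escapes_f: "escapes E A (f i)" if "\<forall>j<i. succs E (f j) \<noteq> {}" for i
    using that by (induction i) (auto simp: f_Suc next_node, simp add: f_def assms)
  have edge_f: "(f i, f (Suc i)) \<in> E" if "\<forall>j\<le>i. succs E (f j) \<noteq> {}" for i
    using that escapes_f[of i] next_node f_Suc by auto
  show ?thesis
  proof (cases "\<forall>i. succs E (f i) \<noteq> {}")
    case True
    then have "ipath_from E n f \<and> range f \<inter> A = {}"
      using escapes_f edge_f by (auto simp: ipath_from_def ipath_def f_def dest: escapes_not_in)
    then show ?thesis by blast
  next
    case False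
    define k where "k = (LEAST i. succs E (f i) = {})"
    have sink: "succs E (f k) = {}"
      unfolding k_def using False by (metis (mono_tags, lifting) LeastI)
    have inner: "\<forall>j<k. succs E (f j) \<noteq> {}"
      unfolding k_def using not_less_Least by blast
    have "fpath E (map f [0..<Suc k])"
      using inner edge_f by (simp add: fpath_def nth_append del: upt_Suc)
    moreover have "hd (map f [0..<Suc k]) = n" "last (map f [0..<Suc k]) = f k"
      by (simp_all add: hd_map last_map del: upt_Suc, simp add: f_def)
    moreover have "f i \<notin> A" if "i \<le> k" for i
      using inner that by (intro escapes_not_in[OF escapes_f]) auto
    then have "set (map f [0..<Suc k]) \<inter> A = {}"
      by (auto simp del: upt_Suc)
    ultimately have "max_fpath_from E n (map f [0..<Suc k]) \<and> set (map f [0..<Suc k]) \<inter> A = {}"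
      using sink by (simp add: max_fpath_from_def)
    then show ?thesis by blast
  qed
qed

lemma escapes_iff_max_path:
  "escapes E A n \<longleftrightarrow>
     (\<exists>xs. max_fpath_from E n xs \<and> set xs \<inter> A = {}) \<or>
     (\<exists>f. ipath_from E n f \<and> range f \<inter> A = {})"
  using max_path_if_escapes escapes_if_max_fpath escapes_if_ipath by metis

lemma on_all_max_paths_iff_not_escapes: "on_all_max_paths E n a \<longleftrightarrow> \<not> escapes E {a} n"
  unfolding on_all_max_paths_def escapes_iff_max_path by blast

lemma before_on_all_max_paths_step:
  assumes before: "before_on_all_max_paths E n a b"
    and "(n, m) \<in> E" "n \<noteq> a" "n \<noteq> b"
  shows "before_on_all_max_paths E m a b"
  unfolding before_on_all_max_paths_def
proof (intro conjI allI impI)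
  fix xs
  assume "max_fpath_from E m xs"
  then have "max_fpath_from E n (n # xs)"
    using assms(2) by (auto simp: max_fpath_from_def fpath_Cons)
  then obtain i where i: "i < length (n # xs)" "(n # xs) ! i = a" "\<forall>j<i. (n # xs) ! j \<noteq> b"
    using before by (auto simp: before_on_all_max_paths_def)
  then obtain k where "i = Suc k" using \<open>n \<noteq> a\<close> by (cases i) auto
  with i show "\<exists>i<length xs. xs ! i = a \<and> (\<forall>j<i. xs ! j \<noteq> b)"
    by (metis Suc_less_eq Suc_mono nth_Cons_Suc length_Cons)
next
  fix f
  assume "ipath_from E m f"
  then have "ipath_from E n (case_nat n f)"
    using assms(2) by (auto simp: ipath_from_def ipath_def split: nat.split)
  then obtain i where i: "case_nat n f i = a" "\<forall>j<i. case_nat n f j \<noteq> b"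
    using before by (auto simp: before_on_all_max_paths_def)
  then obtain k where "i = Suc k" using \<open>n \<noteq> a\<close> by (cases i) auto
  with i show "\<exists>i. f i = a \<and> (\<forall>j<i. f j \<noteq> b)"
    by (metis Suc_mono old.nat.simps(5))
qed

lemma not_before_on_all_max_paths_self:
  assumes "a \<noteq> b"
  shows "\<not> before_on_all_max_paths E b a b"
proof
  assume before: "before_on_all_max_paths E b a b"
  from max_path_if_escapes[OF escapes_empty, of E b] show False
  proof (elim disjE exE conjE)
    fix xs
    assume "max_fpath_from E b xs"
    then have "xs ! 0 = b" by (metis fpath_Nil hd_conv_nth max_fpath_from_def)
    moreover obtain i where "xs ! i = a" "\<forall>j<i. xs ! j \<noteq> b"
      using before \<open>max_fpath_from E b xs\<close> by (auto simp: before_on_all_max_paths_def)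
    ultimately show False using assms by (cases i) auto
  next
    fix f
    assume "ipath_from E b f"
    then have "f 0 = b" by (simp add: ipath_from_def)
    moreover obtain i where "f i = a" "\<forall>j<i. f j \<noteq> b"
      using before \<open>ipath_from E b f\<close> by (auto simp: before_on_all_max_paths_def)
    ultimately show False using assms by (cases i) auto
  qed
qed

lemma not_reach_avoiding_if_before_on_all_max_paths:
  assumes "before_on_all_max_paths E n a b" "a \<noteq> b"
  shows "\<not> reach_avoiding E {a} n b"
proof -
  have "fpath E xs \<Longrightarrow> a \<notin> set xs \<Longrightarrow> b \<in> set xs \<Longrightarrow>
      \<not> before_on_all_max_paths E (hd xs) a b" for xs
  proof (induction xs)
    case (Cons x xs)
    show ?case
    proof (cases "x = b")
      case True
      then show ?thesis using not_before_on_all_max_paths_self[OF \<open>a \<noteq> b\<close>] by simp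
    next
      case False
      then have "xs \<noteq> []" "(x, hd xs) \<in> E" "fpath E xs" "x \<noteq> a"
        using Cons.prems by (auto simp: fpath_Cons)
      then show ?thesis
        using Cons False before_on_all_max_paths_step[of E x a b "hd xs"] by auto
    qed
  qed simp
  with assms(1) show ?thesis
    unfolding reach_avoiding_def by (metis disjoint_insert(1) fpath_Nil last_in_set)
qed

lemma before_on_all_max_paths_if_no_path:
  assumes on_all: "on_all_max_paths E n a" and no_path: "\<not> reach_avoiding E {a} n b"
  shows "before_on_all_max_paths E n a b"
  unfolding before_on_all_max_paths_def
proof (intro conjI allI impI)
  fix xs
  assume max: "max_fpath_from E n xs"
  then have "a \<in> set xs" using on_all by (auto simp: on_all_max_paths_def)
  then obtain u w where xs: "xs = u @ a # w" "a \<notin> set u" by (meson split_list_first)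
  have "b \<notin> set u"
  proof
    assume "b \<in> set u"
    moreover have "fpath E u" "hd u = n"
      using max xs \<open>b \<in> set u\<close> by (auto simp: max_fpath_from_def fpath_append hd_append)
    ultimately show False
      using no_path xs(2) reach_avoiding_to_mem[of E u "{a}" b] by auto
  qed
  then show "\<exists>i<length xs. xs ! i = a \<and> (\<forall>j<i. xs ! j \<noteq> b)"
    using xs by (intro exI[of _ "length u"]) (auto simp: nth_append)
next
  fix f
  assume ipath: "ipath_from E n f"
  then have "\<exists>i. f i = a" using on_all by (auto simp: on_all_max_paths_def)
  define i where "i = (LEAST i. f i = a)"
  have "f i = a" unfolding i_def using \<open>\<exists>i. f i = a\<close> by (rule LeastI_ex)
  moreover have "f j \<noteq> b" if "j < i" for j
  proof
    assume "f j = b"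
    have "f k \<noteq> a" if "k \<le> j" for k
    proof -
      have "k < i" using that \<open>j < i\<close> by simp
      then show ?thesis unfolding i_def by (rule not_less_Least)
    qed
    then have "a \<notin> set (map f [0..<Suc j])"
      by (metis atLeastLessThan_iff imageE less_Suc_eq_le set_map set_upt)
    then have "reach_avoiding E {a} n b"
      unfolding reach_avoiding_def using ipath \<open>f j = b\<close>
      by (intro exI[of _ "map f [0..<Suc j]"])
        (auto simp: ipath_from_def fpath_map_upt hd_map last_map simp del: upt_Suc)
    with no_path show False ..
  qed
  ultimately show "\<exists>i. f i = a \<and> (\<forall>j<i. f j \<noteq> b)" by blast
qed

lemma before_on_all_max_paths_iff:
  assumes "a \<noteq> b"
  shows "before_on_all_max_paths E n a b \<longleftrightarrow> \<not> escapes E {a} n \<and> \<not> reach_avoiding E {a} n b"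
proof
  assume before: "before_on_all_max_paths E n a b"
  then have "on_all_max_paths E n a"
    unfolding before_on_all_max_paths_def on_all_max_paths_def by (metis nth_mem)
  with before show "\<not> escapes E {a} n \<and> \<not> reach_avoiding E {a} n b"
    using assms on_all_max_paths_iff_not_escapes not_reach_avoiding_if_before_on_all_max_paths
    by metis
qed (simp add: before_on_all_max_paths_if_no_path on_all_max_paths_iff_not_escapes)

section \<open>Interval graphs\<close>

definition interval_graph :: "('v \<times> 'v) set \<Rightarrow> 'v set \<Rightarrow> ('v \<times> 'v) set" where
  "interval_graph E S = {(x, y). \<exists>xs. interval E S x y xs}"

lemma interval_iff:
  "interval E S x y xs \<longleftrightarrow>
     x \<in> S \<and> y \<in> S \<and> (\<exists>u. xs = x # u @ [y] \<and> fpath E xs \<and> set u \<inter> S = {})"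
proof -
  have "length xs \<ge> 2 \<and> hd xs = x \<and> last xs = y \<longleftrightarrow> xs = x # butlast (tl xs) @ [y]"
    by (cases xs rule: rev_cases; cases "butlast xs") auto
  moreover have "(\<exists>u. xs = x # u @ [y] \<and> fpath E xs \<and> set u \<inter> S = {}) \<longleftrightarrow>
      xs = x # butlast (tl xs) @ [y] \<and> fpath E xs \<and> set (butlast (tl xs)) \<inter> S = {}"
    by (metis butlast_snoc list.sel(3))
  ultimately show ?thesis
    unfolding interval_def all_nth_inner_iff[where P = "\<lambda>z. z \<notin> S"] by blast
qed

lemma in_interval_graph_iff:
  "(x, y) \<in> interval_graph E S \<longleftrightarrow>
     x \<in> S \<and> y \<in> S \<and> (\<exists>u. fpath E (x # u @ [y]) \<and> set u \<inter> S = {})"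
  unfolding interval_graph_def interval_iff by blast

lemma fpath_interval_graph_filter:
  assumes "fpath E xs" "hd xs \<in> S" "last xs \<in> S"
  shows "fpath (interval_graph E S) (filter (\<lambda>x. x \<in> S) xs)"
proof -
  have filter_step: "fpath (interval_graph E S) (x # filter (\<lambda>x. x \<in> S) ys)"
    if "fpath E (x # u @ ys)" "x \<in> S" "set u \<inter> S = {}" "ys \<noteq> []" "last ys \<in> S" for x u ys
    using that
  proof (induction ys arbitrary: x u)
    case (Cons z zs)
    show ?case
    proof (cases "z \<in> S")
      case True
      have "fpath E ((x # u @ [z]) @ zs)" using Cons.prems(1) by simp
      then have "(x, z) \<in> interval_graph E S"
        using Cons.prems True unfolding in_interval_graph_iff fpath_append by auto
      moreover have "fpath E ((x # u) @ z # zs)" using Cons.prems(1) by simp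
      then have "fpath E (z # zs)" unfolding fpath_append by auto
      then have "zs \<noteq> [] \<Longrightarrow> fpath (interval_graph E S) (z # filter (\<lambda>x. x \<in> S) zs)"
        using Cons True by (intro Cons.IH[where u = "[]"]) auto
      ultimately show ?thesis
        using True by (cases "zs = []") (auto simp: fpath_Cons)
    next
      case False
      then have "zs \<noteq> []" using Cons.prems(5) by auto
      then show ?thesis
        using Cons.prems False Cons.IH[of x "u @ [z]"] by auto
    qed
  qed simp
  obtain x ys where "xs = x # ys" using assms(1) by (cases xs) auto
  then show ?thesis
    using assms filter_step[of x "[]" ys] by (cases "ys = []") auto
qed

lemma fpath_interval_graph_lift:
  assumes "fpath (interval_graph E S) ns"
  shows "\<exists>xs. fpath E xs \<and> hd xs = hd ns \<and> last xs = last ns \<and> set xs \<inter> S \<subseteq> set ns"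
  using assms
proof (induction ns rule: induct_list012)
  case (2 x)
  then show ?case by (intro exI[of _ "[x]"]) auto
next
  case (3 x y zs)
  then obtain xs where xs: "fpath E xs" "hd xs = y" "last xs = last (y # zs)"
    "set xs \<inter> S \<subseteq> set (y # zs)"
    by auto
  from 3 obtain u where u: "fpath E ((x # u) @ [y])" "set u \<inter> S = {}"
    by (auto simp: in_interval_graph_iff)
  obtain xs' where xs': "xs = y # xs'" using xs(1,2) by (cases xs) auto
  have "fpath E ((x # u @ [y]) @ tl xs)"
    using u(1) xs by (intro fpath_join) auto
  then have "fpath E ((x # u) @ xs)" by (simp add: xs')
  moreover have "set ((x # u) @ xs) \<inter> S \<subseteq> set (x # y # zs)"
    using u(2) xs(4) by auto
  ultimately show ?case
    using xs xs' by (intro exI[of _ "(x # u) @ xs"]) auto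
qed simp

section \<open>The graph \<open>A\<^sub>p\<close> and its strips\<close>

lemma Ap_eq_interval_graph: "Ap V E p = interval_graph E (Vp V E p)"
  by (simp add: Ap_def interval_graph_def)

lemma Vp_iff: "n \<in> Vp V E p \<longleftrightarrow> n \<in> V \<and> \<not> escapes E {n} p"
  by (simp add: Vp_def on_all_max_paths_iff_not_escapes)

lemma self_in_Vp: "p \<in> V \<Longrightarrow> p \<in> Vp V E p"
  by (auto simp: Vp_iff dest: escapes_not_in)

lemma Vs_iff:
  "n \<in> Vs V E p s \<longleftrightarrow> n \<in> Vp V E p \<and>
     (\<exists>xs. fpath E xs \<and> hd xs = s \<and> last xs = n \<and> set (butlast xs) \<inter> Vp V E p = {})"
  unfolding Vs_def all_nth_butlast_iff[where P = "\<lambda>z. z \<notin> Vp V E p"] by blast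

lemma Vs_subset_Vp: "Vs V E p s \<subseteq> Vp V E p"
  by (auto simp: Vs_def)

lemma strip_iff:
  "strip V E p s ns \<longleftrightarrow> fpath (Ap V E p) ns \<and> hd ns \<in> Vs V E p s \<and>
     set (tl ns) \<subseteq> Vp V E p - Vs V E p s \<and> (\<exists>y. (last ns, y) \<in> Ap V E p \<and> y \<in> Vs V E p s)"
  unfolding strip_def all_nth_tl_iff[where P = "\<lambda>z. z \<in> Vp V E p - Vs V E p s"] by blast

lemma strip_subset_Vp: "strip V E p s ns \<Longrightarrow> set ns \<subseteq> Vp V E p"
  using Vs_subset_Vp[of V E p s] by (cases ns) (auto simp: strip_iff)

lemma contains_before_in_Vp:
  "strip V E p s ns \<Longrightarrow> contains_before ns a b \<Longrightarrow> a \<in> Vp V E p \<and> b \<in> Vp V E p"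
  using strip_subset_Vp by (fastforce simp: contains_before_iff)

lemma reach_avoiding_to_Vs:
  assumes "q \<in> Vs V E p s" "x \<in> Vp V E p" "x \<noteq> q"
  shows "reach_avoiding E {x} s q"
proof -
  obtain xs where xs: "fpath E xs" "hd xs = s" "last xs = q" "set (butlast xs) \<inter> Vp V E p = {}"
    using assms(1) by (auto simp: Vs_iff)
  then have "set xs \<inter> {x} = {}"
    using assms(2,3) by (cases xs rule: rev_cases) auto
  with xs show ?thesis
    unfolding reach_avoiding_def by blast
qed

lemma Vs_meets_path:
  assumes "fpath E xs" "hd xs = s" "set xs \<inter> Vp V E p \<noteq> {}"
  shows "set xs \<inter> Vs V E p s \<noteq> {}"
proof -
  obtain u z w where xs: "xs = u @ z # w" "z \<in> Vp V E p" "\<forall>y\<in>set u. y \<notin> Vp V E p"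
    using assms(3) split_list_first_prop[of xs "\<lambda>y. y \<in> Vp V E p"] by blast
  then have "fpath E (u @ [z])" "hd (u @ [z]) = s"
    using assms(1,2) by (auto simp: fpath_append hd_append)
  then have "z \<in> Vs V E p s"
    using xs(2,3) unfolding Vs_iff by (intro conjI exI[of _ "u @ [z]"]) auto
  then show ?thesis
    using xs(1) by auto
qed

lemma Vs_nonempty:
  assumes "\<not> escapes E {x} s" "x \<in> Vp V E p"
  shows "Vs V E p s \<noteq> {}"
proof -
  have no_escape: "\<not> escapes E (Vp V E p) s"
  proof
    assume "escapes E (Vp V E p) s"
    then have "escapes E {x} s" by (rule escapes_antimono) (use assms(2) in blast)
    with assms(1) show False ..
  qed
  obtain xs where "fpath E xs" "hd xs = s" "last xs \<in> Vp V E p"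
    "set (butlast xs) \<inter> Vp V E p = {}"
    using not_escapes_path[OF no_escape] by blast
  then have "last xs \<in> Vs V E p s"
    unfolding Vs_iff by blast
  then show ?thesis by blast
qed

lemma Ap_edge_to_Vs:
  assumes "(p, s) \<in> E" "p \<in> Vp V E p" "q \<in> Vs V E p s"
  shows "(p, q) \<in> Ap V E p"
proof -
  obtain xs where xs: "fpath E xs" "hd xs = s" "last xs = q" "set (butlast xs) \<inter> Vp V E p = {}"
    using assms(3) by (auto simp: Vs_iff)
  then have "fpath E (p # butlast xs @ [q])"
    using assms(1) by (cases xs rule: rev_cases) (auto simp: fpath_Cons)
  then show ?thesis
    using assms(2,3) xs(4) Vs_subset_Vp[of V E p s]
    unfolding Ap_eq_interval_graph in_interval_graph_iff by blast
qed

lemma reach_avoiding_along_Ap: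
  assumes "(x, y) \<in> Ap V E p" "z \<in> Vp V E p" "z \<noteq> x" "z \<noteq> y"
  shows "reach_avoiding E {z} x y"
proof -
  obtain u where "fpath E (x # u @ [y])" "set u \<inter> Vp V E p = {}"
    using assms(1) unfolding Ap_eq_interval_graph in_interval_graph_iff by blast
  with assms(2-4) show ?thesis
    unfolding reach_avoiding_def by (intro exI[of _ "x # u @ [y]"]) auto
qed

lemma not_escapes_from_Ap_succ:
  assumes "(p, q) \<in> Ap V E p" "z \<in> Vp V E p" "z \<noteq> p"
  shows "\<not> escapes E {z} q"
proof
  assume escapes: "escapes E {z} q"
  then have "z \<noteq> q" using escapes_not_in by fastforce
  with assms have "reach_avoiding E {z} p q" by (intro reach_avoiding_along_Ap) auto
  then have "escapes E {z} p" using escapes by (rule escapes_if_reach_avoiding)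
  with assms(2) show False by (simp add: Vp_iff)
qed

lemma Ap_self_loop_only:
  assumes "(p, p) \<in> Ap V E p" "z \<in> Vp V E p"
  shows "z = p"
proof (rule ccontr)
  assume "z \<noteq> p"
  obtain u where u: "fpath E (p # u @ [p])" "set u \<inter> Vp V E p = {}"
    using assms(1) unfolding Ap_eq_interval_graph in_interval_graph_iff by blast
  then have "(p, hd (u @ [p])) \<in> E" "reach_avoiding E {z} (hd (u @ [p])) p"
    using assms(2) \<open>z \<noteq> p\<close> unfolding reach_avoiding_def
    by (auto simp: fpath_Cons intro!: exI[of _ "u @ [p]"])
  then have "escapes E {z} p" by (rule escapes_if_cycle)
  with assms(2) show False by (simp add: Vp_iff)
qed

lemma reach_avoiding_along_strip:
  assumes "strip V E p s ns" "contains_before ns a b" "c \<in> Vs V E p s" "c \<noteq> a"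
  shows "reach_avoiding E {c} a b"
proof -
  obtain u v w where ns: "ns = u @ a # v @ b # w"
    using assms(2) by (auto simp: contains_before_iff)
  have "fpath (Ap V E p) (u @ (a # v @ [b]) @ w)"
    using assms(1) ns by (simp add: strip_iff)
  then have "fpath (Ap V E p) (a # v @ [b])"
    by (rule fpath_infix) simp
  then obtain xs where xs: "fpath E xs" "hd xs = a" "last xs = b"
    "set xs \<inter> Vp V E p \<subseteq> set (a # v @ [b])"
    using fpath_interval_graph_lift[of E "Vp V E p" "a # v @ [b]"]
    by (auto simp: Ap_eq_interval_graph simp del: set_simps)
  have "set (v @ [b]) \<subseteq> set (tl ns)"
    using ns by (cases u) auto
  then have "c \<notin> set (a # v @ [b])"
    using assms(1,3,4) by (auto simp: strip_iff)
  then show ?thesis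
    using xs assms(3) Vs_subset_Vp[of V E p s] unfolding reach_avoiding_def by blast
qed

lemma strip_if_path:
  assumes "fpath E (c # u @ [y])" "c \<in> Vs V E p s" "y \<in> Vs V E p s" "set u \<inter> Vs V E p s = {}"
    and "contains_before (c # u) a b" "a \<in> Vp V E p" "b \<in> Vp V E p"
  shows "\<exists>ns. strip V E p s ns \<and> contains_before ns a b"
proof -
  let ?P = "\<lambda>z. z \<in> Vp V E p"
  define ns where "ns = c # filter ?P u"
  have Vp: "c \<in> Vp V E p" "y \<in> Vp V E p"
    using assms(2,3) Vs_subset_Vp[of V E p s] by blast+
  then have "fpath (Ap V E p) (filter ?P (c # u @ [y]))"
    unfolding Ap_eq_interval_graph using assms(1) by (intro fpath_interval_graph_filter) auto
  then have "fpath (Ap V E p) (ns @ [y])"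
    using Vp by (simp add: ns_def)
  then have "fpath (Ap V E p) ns \<and> (last ns, y) \<in> Ap V E p"
    unfolding fpath_append by (auto simp: ns_def)
  moreover have "set (tl ns) \<subseteq> Vp V E p - Vs V E p s"
    using assms(4) by (auto simp: ns_def)
  moreover have "contains_before ns a b"
  proof -
    obtain u1 v w where "c # u = u1 @ a # v @ b # w"
      using assms(5) by (auto simp: contains_before_iff)
    then have "filter ?P (c # u) = filter ?P u1 @ a # filter ?P v @ b # filter ?P w"
      using assms(6,7) by simp
    then show ?thesis
      using Vp by (auto simp: ns_def contains_before_iff)
  qed
  ultimately show ?thesis
    using assms(2,3) unfolding strip_iff by (intro exI[of _ ns]) (auto simp: ns_def)
qed

section \<open>From DOD to strips\<close>

lemma Vs_disjoint:
  assumes "before_on_all_max_paths E s1 a b" "before_on_all_max_paths E s2 b a"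
    and "a \<in> Vp V E p" "b \<in> Vp V E p" "a \<noteq> b"
  shows "Vs V E p s1 \<inter> Vs V E p s2 = {}"
proof (rule equals0I)
  fix q
  assume q: "q \<in> Vs V E p s1 \<inter> Vs V E p s2"
  have no_escape: "\<not> escapes E {a} s1"
    and no_path1: "\<not> reach_avoiding E {a} s1 b" and no_path2: "\<not> reach_avoiding E {b} s2 a"
    using assms(1,2,5) by (simp_all add: before_on_all_max_paths_iff)
  have "q \<noteq> b" using reach_avoiding_to_Vs[of q V E p s1 a] q assms(3,5) no_path1 by auto
  moreover have "q \<noteq> a" using reach_avoiding_to_Vs[of q V E p s2 b] q assms(4,5) no_path2 by auto
  ultimately have path1: "reach_avoiding E {a} s1 q" and path2: "reach_avoiding E {b} s2 q"
    using q assms(3,4) reach_avoiding_to_Vs[of q V E p s1 a] reach_avoiding_to_Vs[of q V E p s2 b]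
    by auto
  have "\<not> escapes E {a} q"
    using no_escape escapes_if_reach_avoiding[OF path1] by blast
  then have "reach_avoiding E {b} q a \<or> reach_avoiding E {a} q b"
    using assms(5) by (rule reach_avoiding_first_of)
  then show False
    using no_path1 no_path2 reach_avoiding_trans[OF path1] reach_avoiding_trans[OF path2] by blast
qed

lemma two_Ap_succs_if_before:
  assumes "p \<in> V" "(p, s1) \<in> E" "(p, s2) \<in> E"
    and "before_on_all_max_paths E s1 a b" "before_on_all_max_paths E s2 b a"
    and "a \<in> Vp V E p" "b \<in> Vp V E p" "a \<noteq> b"
  shows "\<exists>y z. y \<noteq> z \<and> (p, y) \<in> Ap V E p \<and> (p, z) \<in> Ap V E p"
proof -
  have "\<not> escapes E {a} s1" "\<not> escapes E {b} s2"
    using assms(4,5,8) by (simp_all add: before_on_all_max_paths_iff)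
  then obtain q1 q2 where q1: "q1 \<in> Vs V E p s1" and q2: "q2 \<in> Vs V E p s2"
    using Vs_nonempty[of E a s1 V p] Vs_nonempty[of E b s2 V p] assms(6,7) by blast
  have "Vs V E p s1 \<inter> Vs V E p s2 = {}"
    using assms(4-8) by (rule Vs_disjoint)
  with q1 q2 have "q1 \<noteq> q2" by blast
  moreover have "(p, q1) \<in> Ap V E p" "(p, q2) \<in> Ap V E p"
    using Ap_edge_to_Vs[OF assms(2) self_in_Vp[OF assms(1)] q1]
      Ap_edge_to_Vs[OF assms(3) self_in_Vp[OF assms(1)] q2] .
  ultimately show ?thesis by blast
qed

lemma last_Vs_entry:
  assumes "before_on_all_max_paths E s1 a b" "before_on_all_max_paths E s2 b a"
    and "succs E p = {s1, s2}" "a \<in> Vp V E p" "a \<noteq> p" "a \<noteq> b"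
  obtains c v where "c \<in> Vs V E p s1" "c \<noteq> p" "fpath E (c # v)" "last (c # v) = a"
    "set v \<inter> Vs V E p s1 = {}" "b \<notin> set (c # v)"
proof -
  let ?V1 = "Vs V E p s1"
  have no_escape: "\<not> escapes E {a} s1" and no_path1: "\<not> reach_avoiding E {a} s1 b"
    and no_path2: "\<not> reach_avoiding E {b} s2 a"
    using assms(1,2,6) by (simp_all add: before_on_all_max_paths_iff)
  then have "reach_avoiding E {b} s1 a"
    using reach_avoiding_first_of[OF no_escape assms(6)] by blast
  then obtain g where g: "fpath E g" "hd g = s1" "last g = a" "b \<notin> set g"
    unfolding reach_avoiding_def by blast
  then have "a \<in> set g" by (metis fpath_Nil last_in_set)
  with g(1,2) assms(4) have "set g \<inter> ?V1 \<noteq> {}"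
    by (intro Vs_meets_path) auto
  then obtain u c v where g_eq: "g = u @ c # v" and c: "c \<in> ?V1" and v: "\<forall>z\<in>set v. z \<notin> ?V1"
    using split_list_last_prop[of g "\<lambda>z. z \<in> ?V1"] by blast
  have path: "fpath E (c # v)" "last (c # v) = a" "b \<notin> set (c # v)"
    using g g_eq by (auto simp: fpath_append)
  have "c \<noteq> p"
  proof
    assume "c = p"
    with path assms(5) have "v \<noteq> []" "(p, hd v) \<in> E" "fpath E v" "last v = a" "b \<notin> set v"
      by (auto simp: fpath_Cons)
    then have "hd v = s1 \<or> hd v = s2"
      using assms(3) by (auto simp: succs_def)
    then show False
    proof
      assume "hd v = s1"
      moreover have "a \<in> set v" using \<open>v \<noteq> []\<close> \<open>last v = a\<close> by auto
      ultimately have "set v \<inter> ?V1 \<noteq> {}"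
        using \<open>fpath E v\<close> assms(4) by (intro Vs_meets_path) auto
      with v show False by blast
    next
      assume "hd v = s2"
      then have "reach_avoiding E {b} s2 a"
        using \<open>fpath E v\<close> \<open>last v = a\<close> \<open>b \<notin> set v\<close> unfolding reach_avoiding_def by blast
      with no_path2 show False ..
    qed
  qed
  with c path v show ?thesis
    using that by blast
qed

lemma succ_path_avoiding_Vs:
  assumes "before_on_all_max_paths E s1 a b" "\<not> escapes E {b} a" "a \<in> Vp V E p" "a \<noteq> b"
  obtains m w where "(a, m) \<in> E" "fpath E w" "hd w = m" "last w = b"
    "set w \<inter> Vs V E p s1 = {}"
proof -
  have no_path: "\<not> reach_avoiding E {a} s1 b"
    using assms(1,4) by (simp add: before_on_all_max_paths_iff)
  obtain m w where m: "(a, m) \<in> E" and w: "fpath E w" "hd w = m" "last w = b" "a \<notin> set w"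
    using reach_avoiding_from_succ[OF assms(2,4)] unfolding reach_avoiding_def by blast
  have "set w \<inter> Vs V E p s1 = {}"
  proof (rule ccontr)
    assume "set w \<inter> Vs V E p s1 \<noteq> {}"
    then obtain z where z: "z \<in> set w" "z \<in> Vs V E p s1" by blast
    then have "reach_avoiding E {a} s1 z"
      using reach_avoiding_to_Vs[OF z(2) assms(3)] w(4) by auto
    moreover have "reach_avoiding E {a} z b"
      using reach_avoiding_from_mem[OF w(1) _ z(1)] w(3,4) by auto
    ultimately have "reach_avoiding E {a} s1 b" by (rule reach_avoiding_trans)
    with no_path show False ..
  qed
  with m w show ?thesis using that by blast
qed

lemma not_escapes_Vs:
  assumes "before_on_all_max_paths E s2 b a" "(p, s2) \<in> E" "a \<noteq> b"
    and "c \<in> Vs V E p s1" "c \<noteq> p" "reach_avoiding E {b} c a"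
  shows "\<not> escapes E (Vs V E p s1) b"
proof
  assume "escapes E (Vs V E p s1) b"
  then have escapes_c: "escapes E {c} b"
    by (rule escapes_antimono) (use assms(4) in blast)
  have no_escape: "\<not> escapes E {b} s2" and no_path: "\<not> reach_avoiding E {b} s2 a"
    using assms(1,3) by (simp_all add: before_on_all_max_paths_iff)
  have "b \<noteq> c" using reach_avoiding_not_in[OF assms(6)] by auto
  from reach_avoiding_first_of[OF no_escape this] show False
  proof
    assume "reach_avoiding E {c} s2 b"
    then have "escapes E {c} s2" using escapes_c by (rule escapes_if_reach_avoiding)
    moreover have "c \<in> Vp V E p" using assms(4) Vs_subset_Vp[of V E p s1] by blast
    then have "\<not> escapes E {c} s2"
      using assms(2,5) not_escapes_step[of E "{c}" p s2] by (auto simp: Vp_iff)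
    ultimately show False by contradiction
  next
    assume "reach_avoiding E {b} s2 c"
    then have "reach_avoiding E {b} s2 a" using assms(6) by (rule reach_avoiding_trans)
    with no_path show False ..
  qed
qed

lemma strip_if_before_on_all_max_paths:
  assumes before1: "before_on_all_max_paths E s1 a b"
    and before2: "before_on_all_max_paths E s2 b a"
    and succs: "succs E p = {s1, s2}"
    and "a \<in> Vp V E p" "b \<in> Vp V E p" "a \<noteq> p" "b \<noteq> p" "a \<noteq> b"
  shows "\<exists>ns. strip V E p s1 ns \<and> contains_before ns a b"
proof -
  let ?V1 = "Vs V E p s1"
  have edges: "(p, s1) \<in> E" "(p, s2) \<in> E" using succs by (auto simp: succs_def)
  obtain c v where c: "c \<in> ?V1" "c \<noteq> p" and cv: "fpath E (c # v)" "last (c # v) = a"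
    "set v \<inter> ?V1 = {}" "b \<notin> set (c # v)"
    using last_Vs_entry[OF before1 before2 succs \<open>a \<in> Vp V E p\<close> \<open>a \<noteq> p\<close> \<open>a \<noteq> b\<close>] .
  have c_to_a: "reach_avoiding E {b} c a"
    using cv unfolding reach_avoiding_def by (intro exI[of _ "c # v"]) auto
  have "reach_avoiding E {b} s1 c"
    using reach_avoiding_to_Vs[OF c(1) \<open>b \<in> Vp V E p\<close>] cv(4) by auto
  then have "reach_avoiding E {b} s1 a" using c_to_a by (rule reach_avoiding_trans)
  moreover have "\<not> escapes E {b} s1"
    using \<open>b \<in> Vp V E p\<close> edges(1) \<open>b \<noteq> p\<close> not_escapes_step[of E "{b}" p s1]
    by (auto simp: Vp_iff)
  ultimately have "\<not> escapes E {b} a"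
    by (metis escapes_if_reach_avoiding)
  then obtain m w where m: "(a, m) \<in> E" and w: "fpath E w" "hd w = m" "last w = b"
    "set w \<inter> ?V1 = {}"
    using succ_path_avoiding_Vs[OF before1 _ \<open>a \<in> Vp V E p\<close> \<open>a \<noteq> b\<close>] by blast
  have "w \<noteq> []" using w(1) by auto
  with w have "b \<notin> ?V1" by (metis disjoint_iff last_in_set)
  with not_escapes_Vs[OF before2 edges(2) \<open>a \<noteq> b\<close> c c_to_a]
  obtain u y where d: "fpath E (b # u @ [y])" "y \<in> ?V1" "set u \<inter> ?V1 = {}"
    by (rule not_escapes_path_outside)
  have "fpath E ((c # v) @ w)"
    unfolding fpath_append using cv(1,2) w(1,2) m by auto
  then have "fpath E (((c # v) @ w) @ tl (b # u @ [y]))"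
    using d(1) w(3) \<open>w \<noteq> []\<close> by (intro fpath_join) auto
  then have path: "fpath E (c # (v @ w @ u) @ [y])" by simp
  have "contains_before ((c # v) @ w @ u) a b"
    using contains_before_append[of "c # v" w u] cv(2) w(3) \<open>w \<noteq> []\<close> by simp
  moreover have "set (v @ w @ u) \<inter> ?V1 = {}"
    using cv(3) w(4) d(3) by auto
  ultimately show ?thesis
    using strip_if_path[OF path c(1) d(2)] \<open>a \<in> Vp V E p\<close> \<open>b \<in> Vp V E p\<close> by simp
qed

section \<open>From strips to DOD\<close>

lemma not_escapes_within_Vp:
  assumes "(p, q1) \<in> Ap V E p" "(p, q2) \<in> Ap V E p" "q1 \<noteq> q2"
    and "x \<in> Vp V E p" "x \<noteq> p" "y \<in> Vp V E p" "y \<noteq> p"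
  shows "\<not> escapes E {y} x"
proof
  assume escapes: "escapes E {y} x"
  have q_Vp: "q1 \<in> Vp V E p" "q2 \<in> Vp V E p"
    using assms(1,2) unfolding Ap_eq_interval_graph in_interval_graph_iff by blast+
  have q_not_p: "q1 \<noteq> p" "q2 \<noteq> p"
    using Ap_self_loop_only assms(1,2,4,5) by metis+
  have "\<forall>q\<in>{q1, q2}. \<not> escapes E {y} q"
    using not_escapes_from_Ap_succ[OF assms(1) assms(6,7)]
      not_escapes_from_Ap_succ[OF assms(2) assms(6,7)] by blast
  with escapes have "escapes E ({y} \<union> {q1, q2}) x" by (rule escapes_Un)
  then have "escapes E {q1, q2} x" by (rule escapes_antimono) blast
  moreover obtain xs where xs: "fpath E xs" "hd xs = q1" "last xs \<in> {x}"
    using not_escapes_path[OF not_escapes_from_Ap_succ[OF assms(1) assms(4,5)]] by blast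
  ultimately have "escapes E {q1, q2} (last xs)" by simp
  moreover have "set xs \<inter> {q1, q2} \<noteq> {}"
    using xs(1,2) by (metis disjoint_iff fpath_Nil hd_in_set insertI1)
  ultimately obtain q where "q \<in> {q1, q2}" "escapes E ({q1, q2} - {q}) q"
    using escapes_last_visit[OF xs(1)] by blast
  then show False
    using assms(3) not_escapes_from_Ap_succ[OF assms(1) q_Vp(2) q_not_p(2)]
      not_escapes_from_Ap_succ[OF assms(2) q_Vp(1) q_not_p(1)]
    by (auto simp: insert_Diff_if)
qed

lemma before_on_all_max_paths_if_strip:
  assumes two_succs: "(p, q1) \<in> Ap V E p" "(p, q2) \<in> Ap V E p" "q1 \<noteq> q2"
    and strip: "strip V E p s ns" "contains_before ns a b"
    and "(p, s) \<in> E" "a \<noteq> p" "b \<noteq> p" "a \<noteq> b"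
  shows "before_on_all_max_paths E s a b"
proof -
  have ab_Vp: "a \<in> Vp V E p" "b \<in> Vp V E p"
    using contains_before_in_Vp[OF strip] by auto
  then have no_escape_p: "\<not> escapes E {a} p" by (simp add: Vp_iff)
  then have "\<not> escapes E {a} s"
    using \<open>(p, s) \<in> E\<close> \<open>a \<noteq> p\<close> not_escapes_step[of E "{a}" p s] by auto
  moreover have "\<not> reach_avoiding E {a} s b"
  proof
    assume "reach_avoiding E {a} s b"
    then obtain g where g: "fpath E g" "hd g = s" "last g = b" "a \<notin> set g"
      unfolding reach_avoiding_def by blast
    have "p \<notin> set g"
    proof
      assume "p \<in> set g"
      with g have "reach_avoiding E {a} s p"
        using reach_avoiding_to_mem[OF g(1)] by auto
      with \<open>(p, s) \<in> E\<close> have "escapes E {a} p" by (rule escapes_if_cycle)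
      with no_escape_p show False ..
    qed
    have "b \<in> set g" using g(1,3) by (metis fpath_Nil last_in_set)
    with g(1,2) ab_Vp(2) have "set g \<inter> Vs V E p s \<noteq> {}"
      by (intro Vs_meets_path) auto
    then obtain c where c: "c \<in> set g" "c \<in> Vs V E p s" by blast
    then have c_Vp: "c \<in> Vp V E p" and "c \<noteq> p" "c \<noteq> a"
      using Vs_subset_Vp[of V E p s] \<open>p \<notin> set g\<close> g(4) by auto
    have c_to_b: "reach_avoiding E {a} c b"
      using reach_avoiding_from_mem[OF g(1) _ c(1)] g(3,4) by auto
    have a_to_b: "reach_avoiding E {c} a b"
      using strip c(2) \<open>c \<noteq> a\<close> by (rule reach_avoiding_along_strip)
    have "\<not> escapes E {a} b" "\<not> escapes E {c} b"
      using not_escapes_within_Vp[OF two_succs] ab_Vp c_Vp \<open>a \<noteq> p\<close> \<open>b \<noteq> p\<close> \<open>c \<noteq> p\<close> by auto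
    with a_to_b c_to_b show False
      using escapes_if_reach_avoiding_each_other[of E a b c] by blast
  qed
  ultimately show ?thesis
    using \<open>a \<noteq> b\<close> by (simp add: before_on_all_max_paths_iff)
qed

theorem theorem4p13:
  fixes V :: "'v set" and E :: "('v \<times> 'v) set" and p a b s1 s2 :: 'v
  assumes "cfg V E"
    and "p \<in> V" and "a \<in> V" and "b \<in> V"
    and "p \<noteq> a" and "p \<noteq> b" and "a \<noteq> b"
    and "s1 \<noteq> s2" and "succs E p = {s1, s2}"
  shows "DOD E p s1 s2 a b \<longleftrightarrow>
           ((\<exists>y z. y \<noteq> z \<and> (p, y) \<in> Ap V E p \<and> (p, z) \<in> Ap V E p) \<and>
            (\<exists>ns. strip V E p s1 ns \<and> contains_before ns a b) \<and>
            (\<exists>ns. strip V E p s2 ns \<and> contains_before ns b a))"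
proof -
  have ne: "a \<noteq> p" "b \<noteq> p" "b \<noteq> a" using assms(5-7) by auto
  have edges: "(p, s1) \<in> E" "(p, s2) \<in> E" and succs': "succs E p = {s2, s1}"
    using assms(9) by (auto simp: succs_def)
  have DOD_iff: "DOD E p s1 s2 a b \<longleftrightarrow> a \<in> Vp V E p \<and> b \<in> Vp V E p \<and>
      before_on_all_max_paths E s1 a b \<and> before_on_all_max_paths E s2 b a"
    using assms(3,4) by (auto simp: DOD_def Vp_def)
  show ?thesis
    unfolding DOD_iff
    using two_Ap_succs_if_before[OF assms(2) edges _ _ _ _ assms(7)]
      strip_if_before_on_all_max_paths[OF _ _ assms(9) _ _ ne(1,2) assms(7)]
      strip_if_before_on_all_max_paths[OF _ _ succs' _ _ ne(2,1,3)]
      before_on_all_max_paths_if_strip[OF _ _ _ _ _ edges(1) ne(1,2) assms(7)]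
      before_on_all_max_paths_if_strip[OF _ _ _ _ _ edges(2) ne(2,1,3)]
      contains_before_in_Vp
    by meson
qed

end
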